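(* Let $X=(x_1,\dots,x_t)$ be distinct elements of $[n]$ and let $\mathrm{Shuffle}(\pi,X)$ be the procedure: for $i=t,t-1,\dots,1$, choose $z$ uniformly at random from $[n]\setminus\{x_1,\dots,x_{i-1}\}$ and swap the values $\pi(x_i)$ and $\pi(z)$; output $\pi$. (a) If $\phi:X\to[n]$ is injective and $\pi$ is uniformly random among permutations of $[n]$ with $\pi|_X=\phi$, then $\mathrm{Shuffle}(\pi,X)$ is a uniformly random permutation of $[n]$. (b) Let $E$ be a pattern event with $\mathrm{vbl}(E)=X$ and let $\pi\in E$. If $E'$ is a pattern event with $\pi\notin E'$ and $\mathrm{Shuffle}(\pi,X)\in E'$ with positive probability, then there exist $(x,y)\in P(E)$ and $(x',y')\in P(E')$ with $x=x'$ or $y=y'$.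
   Context: The probability space is the set of permutations of $[n]$ with the uniform measure. A pattern event $E$ is given by a set $P(E)=\{(x_1,y_1),\dots,(x_k,y_k)\}\subseteq[n]\times[n]$ and occurs for $\pi$ iff $\pi(x_j)=y_j$ for all $j$; $\mathrm{vbl}(E)=\{x:\exists y,(x,y)\in P(E)\}$. "Swap the values $\pi(a)$ and $\pi(b)$" means replacing $\pi$ by $\pi\circ\tau_{ab}$ with $\tau_{ab}$ the transposition of $a,b$ (no-op if $a=b$). *)

theory Defs
  imports "HOL-Probability.Probability" "HOL-Combinatorics.Permutations"
begin

text \<open>Permutations of [n] = {1..n} are functions p with p permutes {1..n}.
 A pattern event is represented by its set P of pairs.\<close>

definition pattern_event :: "nat \<Rightarrow> (nat \<times> nat) set \<Rightarrow> bool" where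
  "pattern_event n P \<longleftrightarrow> P \<subseteq> {1..n} \<times> {1..n}"

definition occurs :: "(nat \<times> nat) set \<Rightarrow> (nat \<Rightarrow> nat) \<Rightarrow> bool" where
  "occurs P \<pi> \<longleftrightarrow> (\<forall>(x, y) \<in> P. \<pi> x = y)"

definition vbl :: "(nat \<times> nat) set \<Rightarrow> nat set" where
  "vbl P = {x. \<exists>y. (x, y) \<in> P}"

definition swap_vals :: "(nat \<Rightarrow> nat) \<Rightarrow> nat \<Rightarrow> nat \<Rightarrow> (nat \<Rightarrow> nat)" where
  "swap_vals \<pi> a b = \<pi> \<circ> Transposition.transpose a b"

text \<open>shuffle_from n X i pi performs the steps for indices i, i-1, ..., 1 (1-based),
  where x_(k) = X ! (k-1).\<close>
fun shuffle_from :: "nat \<Rightarrow> nat list \<Rightarrow> nat \<Rightarrow> (nat \<Rightarrow> nat) \<Rightarrow> (nat \<Rightarrow> nat) pmf" where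
  "shuffle_from n X 0 \<pi> = return_pmf \<pi>"
| "shuffle_from n X (Suc i) \<pi> =
     pmf_of_set ({1..n} - set (take i X)) \<bind>
       (\<lambda>z. shuffle_from n X i (swap_vals \<pi> (X ! i) z))"

definition Shuffle :: "nat \<Rightarrow> nat list \<Rightarrow> (nat \<Rightarrow> nat) \<Rightarrow> (nat \<Rightarrow> nat) pmf" where
  "Shuffle n X \<pi> = shuffle_from n X (length X) \<pi>"

end

theory Submission
  imports Defs
begin

text \<open>
  Part (a) is proved backwards from the last step of the procedure.  Write \<open>A\<^sub>S\<close> for the
  permutations of \<open>[n]\<close> agreeing with \<open>\<phi>\<close> on \<open>S\<close>.  For \<open>x \<notin> S\<close> the map
  \<open>(\<pi>, z) \<mapsto> \<pi> \<circ> (x z)\<close> is a bijection from \<open>A\<^bsub>S \<union> {x}\<^esub> \<times> ([n] - S)\<close> onto \<open>A\<^sub>S\<close>,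
  its inverse recovering \<open>z\<close> as the preimage of \<open>\<phi> x\<close>.  Hence one step of the shuffle
  turns the uniform distribution on \<open>A\<^bsub>{x\<^sub>1,\<dots>,x\<^sub>i}\<^esub>\<close> into the uniform distribution on
  \<open>A\<^bsub>{x\<^sub>1,\<dots>,x\<^bsub>i-1\<^esub>}\<^esub>\<close>, and after all steps we reach \<open>A\<^sub>\<emptyset>\<close>, the uniform permutation.
  For part (b), the step at \<open>x\<^sub>i\<close> never touches \<open>x\<^sub>1,\<dots>,x\<^bsub>i-1\<^esub>\<close>, so by induction
  a position \<open>x' \<notin> X\<close> can only receive its old value or a value \<open>\<pi>(x)\<close> with \<open>x \<in> X\<close>.
\<close>

definition perms_agreeing :: "nat \<Rightarrow> nat set \<Rightarrow> (nat \<Rightarrow> nat) \<Rightarrow> (nat \<Rightarrow> nat) set" where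
  "perms_agreeing n S \<phi> = {\<pi>. \<pi> permutes {1..n} \<and> (\<forall>x\<in>S. \<pi> x = \<phi> x)}"

lemma finite_perms_agreeing: "finite (perms_agreeing n S \<phi>)"
  by (rule finite_subset[OF _ finite_permutations[of "{1..n}"]]) (auto simp: perms_agreeing_def)

lemma perms_agreeing_empty: "perms_agreeing n {} \<phi> = {\<pi>. \<pi> permutes {1..n}}"
  by (simp add: perms_agreeing_def)

lemma nth_notin_set_take:
  assumes "distinct xs" and "i < length xs"
  shows "xs ! i \<notin> set (take i xs)"
proof -
  have "xs ! i \<in> set (drop i xs)"
    using assms(2) by (simp add: Cons_nth_drop_Suc[symmetric])
  thus ?thesis
    using set_take_disj_set_drop_if_distinct[OF assms(1) order_refl] by blast
qed

lemma set_take_Suc_nth: "i < length xs \<Longrightarrow> set (take (Suc i) xs) = insert (xs ! i) (set (take i xs))"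
  by (simp add: take_Suc_conv_app_nth)

lemma pair_pmf_of_set:
  assumes "finite A" "A \<noteq> {}" "finite B" "B \<noteq> {}"
  shows "pair_pmf (pmf_of_set A) (pmf_of_set B) = pmf_of_set (A \<times> B)"
proof (rule pmf_eqI)
  fix p :: "'a \<times> 'b"
  show "pmf (pair_pmf (pmf_of_set A) (pmf_of_set B)) p = pmf (pmf_of_set (A \<times> B)) p"
    using assms by (cases p) (simp add: pmf_pair indicator_def card_cartesian_product)
qed

lemma swap_vals_in_perms_agreeing:
  assumes "\<pi> \<in> perms_agreeing n (insert x S) \<phi>"
    and "x \<in> {1..n}" "x \<notin> S" "z \<in> {1..n} - S"
  shows "swap_vals \<pi> x z \<in> perms_agreeing n S \<phi>"
proof -
  have "Transposition.transpose x z permutes {1..n}"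
    using assms(2,4) by (intro permutes_swap_id) auto
  hence "swap_vals \<pi> x z permutes {1..n}"
    using assms(1) permutes_compose by (auto simp: swap_vals_def perms_agreeing_def)
  moreover have "swap_vals \<pi> x z y = \<phi> y" if "y \<in> S" for y
    using assms that by (auto simp: swap_vals_def perms_agreeing_def Transposition.transpose_def)
  ultimately show ?thesis by (simp add: perms_agreeing_def)
qed

lemma swap_vals_preimage_in_perms_agreeing:
  assumes \<sigma>: "\<sigma> \<in> perms_agreeing n S \<phi>"
    and x: "x \<in> {1..n}" "x \<notin> S"
    and \<phi>: "inj_on \<phi> (insert x S)" "\<phi> x \<in> {1..n}"
  defines "z \<equiv> inv \<sigma> (\<phi> x)"
  shows "z \<in> {1..n} - S" and "swap_vals \<sigma> x z \<in> perms_agreeing n (insert x S) \<phi>"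
proof -
  have perm: "\<sigma> permutes {1..n}" using \<sigma> by (simp add: perms_agreeing_def)
  have \<sigma>z: "\<sigma> z = \<phi> x" using perm by (simp add: z_def permutes_inverses(1))
  have "z \<in> {1..n}"
    using permutes_in_image[OF permutes_inv[OF perm]] \<phi>(2) by (simp add: z_def)
  moreover have "z \<notin> S"
  proof
    assume "z \<in> S"
    hence "\<phi> z = \<phi> x" using \<sigma> \<sigma>z by (simp add: perms_agreeing_def)
    hence "z = x" using \<phi>(1) \<open>z \<in> S\<close> by (meson inj_onD insertI1 insertI2)
    with \<open>z \<in> S\<close> x(2) show False by simp
  qed
  ultimately show "z \<in> {1..n} - S" by simp
  have "swap_vals \<sigma> x z permutes {1..n}"
    using \<open>z \<in> {1..n}\<close> x(1) perm by (simp add: swap_vals_def permutes_compose permutes_swap_id)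
  moreover have "swap_vals \<sigma> x z y = \<phi> y" if "y \<in> insert x S" for y
    using that \<sigma> \<sigma>z x(2) \<open>z \<notin> S\<close>
    by (auto simp: swap_vals_def perms_agreeing_def Transposition.transpose_def)
  ultimately show "swap_vals \<sigma> x z \<in> perms_agreeing n (insert x S) \<phi>"
    by (simp add: perms_agreeing_def)
qed

lemma bij_betw_swap_vals_perms_agreeing:
  assumes x: "x \<in> {1..n}" "x \<notin> S"
    and \<phi>: "inj_on \<phi> (insert x S)" "\<phi> x \<in> {1..n}"
  shows "bij_betw (\<lambda>(\<pi>, z). swap_vals \<pi> x z)
           (perms_agreeing n (insert x S) \<phi> \<times> ({1..n} - S)) (perms_agreeing n S \<phi>)"
proof (rule bij_betwI[where g = "\<lambda>\<sigma>. (swap_vals \<sigma> x (inv \<sigma> (\<phi> x)), inv \<sigma> (\<phi> x))"])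
  show "(\<lambda>(\<pi>, z). swap_vals \<pi> x z) \<in> perms_agreeing n (insert x S) \<phi> \<times> ({1..n} - S)
          \<rightarrow> perms_agreeing n S \<phi>"
    using swap_vals_in_perms_agreeing[OF _ x] by auto
  show "(\<lambda>\<sigma>. (swap_vals \<sigma> x (inv \<sigma> (\<phi> x)), inv \<sigma> (\<phi> x)))
          \<in> perms_agreeing n S \<phi> \<rightarrow> perms_agreeing n (insert x S) \<phi> \<times> ({1..n} - S)"
    using swap_vals_preimage_in_perms_agreeing[OF _ x \<phi>] by auto
next
  fix p assume p: "p \<in> perms_agreeing n (insert x S) \<phi> \<times> ({1..n} - S)"
  obtain \<pi> z where pz: "p = (\<pi>, z)" by (cases p)
  have "swap_vals \<pi> x z permutes {1..n}"
    using swap_vals_in_perms_agreeing[OF _ x] p pz by (auto simp: perms_agreeing_def)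
  moreover have "swap_vals \<pi> x z z = \<phi> x"
    using p pz by (simp add: swap_vals_def perms_agreeing_def)
  ultimately have "inv (swap_vals \<pi> x z) (\<phi> x) = z"
    by (simp add: permutes_inv_eq)
  thus "(\<lambda>\<sigma>. (swap_vals \<sigma> x (inv \<sigma> (\<phi> x)), inv \<sigma> (\<phi> x))) ((\<lambda>(\<pi>, z). swap_vals \<pi> x z) p) = p"
    by (simp add: pz swap_vals_def o_assoc[symmetric])
qed (simp add: swap_vals_def o_assoc[symmetric])

lemma perms_agreeing_nonempty:
  assumes "finite S" "S \<subseteq> {1..n}" "inj_on \<phi> S" "\<phi> ` S \<subseteq> {1..n}"
  shows "perms_agreeing n S \<phi> \<noteq> {}"
  using assms
proof (induction S rule: finite_induct)
  case empty
  have "id \<in> perms_agreeing n {} \<phi>" by (simp add: perms_agreeing_def permutes_id)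
  thus ?case by blast
next
  case (insert x S)
  have "bij_betw (\<lambda>(\<pi>, z). swap_vals \<pi> x z)
          (perms_agreeing n (insert x S) \<phi> \<times> ({1..n} - S)) (perms_agreeing n S \<phi>)"
    using insert by (intro bij_betw_swap_vals_perms_agreeing) auto
  with insert show ?case by (auto simp: bij_betw_def)
qed

lemma bind_pmf_of_set_perms_agreeing_swap:
  assumes x: "x \<in> {1..n}" "x \<notin> S"
    and \<phi>: "inj_on \<phi> (insert x S)" "\<phi> x \<in> {1..n}"
    and nonempty: "perms_agreeing n S \<phi> \<noteq> {}"
  shows "pmf_of_set (perms_agreeing n (insert x S) \<phi>) \<bind>
           (\<lambda>\<pi>. pmf_of_set ({1..n} - S) \<bind> (\<lambda>z. g (swap_vals \<pi> x z)))
         = pmf_of_set (perms_agreeing n S \<phi>) \<bind> g"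
proof -
  let ?A = "perms_agreeing n (insert x S) \<phi>" and ?Z = "{1..n} - S"
  have bij: "bij_betw (\<lambda>(\<pi>, z). swap_vals \<pi> x z) (?A \<times> ?Z) (perms_agreeing n S \<phi>)"
    using bij_betw_swap_vals_perms_agreeing[OF x \<phi>] .
  have "?Z \<noteq> {}" using x by auto
  moreover have "?A \<noteq> {}" using bij nonempty by (auto simp: bij_betw_def)
  ultimately have "pmf_of_set ?A \<bind> (\<lambda>\<pi>. pmf_of_set ?Z \<bind> (\<lambda>z. g (swap_vals \<pi> x z)))
      = map_pmf (\<lambda>(\<pi>, z). swap_vals \<pi> x z) (pmf_of_set (?A \<times> ?Z)) \<bind> g"
    by (simp add: pair_pmf_of_set[symmetric] finite_perms_agreeing bind_map_pmf
        pair_pmf_def bind_assoc_pmf bind_return_pmf)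
  also have "\<dots> = pmf_of_set (perms_agreeing n S \<phi>) \<bind> g"
    using \<open>?A \<noteq> {}\<close> \<open>?Z \<noteq> {}\<close>
    by (subst map_pmf_of_set_bij_betw[OF bij]) (auto simp: finite_perms_agreeing)
  finally show ?thesis .
qed

lemma shuffle_from_uniform:
  assumes X: "distinct X" "set X \<subseteq> {1..n}"
    and \<phi>: "inj_on \<phi> (set X)" "\<phi> ` set X \<subseteq> {1..n}"
    and "i \<le> length X"
  shows "pmf_of_set (perms_agreeing n (set (take i X)) \<phi>) \<bind> shuffle_from n X i
         = pmf_of_set {\<pi>. \<pi> permutes {1..n}}"
  using \<open>i \<le> length X\<close>
proof (induction i)
  case 0
  show ?case by (simp add: perms_agreeing_empty bind_return_pmf')
next
  case (Suc i)
  let ?T = "set (take i X)"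
  have i: "i < length X" using Suc.prems by simp
  have T: "?T \<subseteq> set X" by (rule set_take_subset)
  have step: "shuffle_from n X (Suc i)
      = (\<lambda>\<pi>. pmf_of_set ({1..n} - ?T) \<bind> (\<lambda>z. shuffle_from n X i (swap_vals \<pi> (X ! i) z)))"
    by (simp add: fun_eq_iff)
  have "pmf_of_set (perms_agreeing n (set (take (Suc i) X)) \<phi>) \<bind> shuffle_from n X (Suc i)
      = pmf_of_set (perms_agreeing n (insert (X ! i) ?T) \<phi>) \<bind>
          (\<lambda>\<pi>. pmf_of_set ({1..n} - ?T) \<bind> (\<lambda>z. shuffle_from n X i (swap_vals \<pi> (X ! i) z)))"
    by (simp only: set_take_Suc_nth[OF i] step)
  also have "\<dots> = pmf_of_set (perms_agreeing n ?T \<phi>) \<bind> shuffle_from n X i"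
  proof (rule bind_pmf_of_set_perms_agreeing_swap)
    show "X ! i \<in> {1..n}" "\<phi> (X ! i) \<in> {1..n}" using X(2) \<phi>(2) i nth_mem by blast+
    show "X ! i \<notin> ?T" using nth_notin_set_take[OF X(1) i] .
    show "inj_on \<phi> (insert (X ! i) ?T)" by (rule inj_on_subset[OF \<phi>(1)]) (use T i in auto)
    show "perms_agreeing n ?T \<phi> \<noteq> {}"
      using T X(2) \<phi> by (intro perms_agreeing_nonempty) (auto intro: inj_on_subset)
  qed
  also have "\<dots> = pmf_of_set {\<pi>. \<pi> permutes {1..n}}"
    using Suc by simp
  finally show ?case .
qed

lemma shuffle_from_values:
  assumes X: "distinct X" "set X \<subseteq> {1..n}"
  shows "\<lbrakk>i \<le> length X; \<sigma> \<in> set_pmf (shuffle_from n X i \<pi>); x \<notin> set (take i X)\<rbrakk>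
         \<Longrightarrow> \<sigma> x \<in> \<pi> ` insert x (set (take i X))"
proof (induction i arbitrary: \<pi>)
  case 0
  thus ?case by simp
next
  case (Suc i)
  let ?T = "set (take i X)"
  have i: "i < length X" using Suc.prems by simp
  have xi: "X ! i \<notin> ?T" "X ! i \<in> {1..n}"
    using nth_notin_set_take[OF X(1) i] X(2) nth_mem[OF i] by auto
  obtain z where z: "z \<in> {1..n} - ?T"
    and \<sigma>: "\<sigma> \<in> set_pmf (shuffle_from n X i (swap_vals \<pi> (X ! i) z))"
  proof -
    have Z: "{1..n} - ?T \<noteq> {}" using xi by auto
    have "\<sigma> \<in> set_pmf (pmf_of_set ({1..n} - ?T) \<bind>
            (\<lambda>z. shuffle_from n X i (swap_vals \<pi> (X ! i) z)))"
      using Suc.prems(2) by simp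
    then show thesis using that
      unfolding set_bind_pmf set_pmf_of_set[OF Z finite_Diff[OF finite_atLeastAtMost]] by blast
  qed
  have x: "x \<notin> ?T" "x \<noteq> X ! i" using Suc.prems(3) i by (auto simp: set_take_Suc_nth)
  have "swap_vals \<pi> (X ! i) z ` insert x ?T \<subseteq> \<pi> ` insert x (insert (X ! i) ?T)"
    using x xi z by (auto simp: swap_vals_def Transposition.transpose_def)
  moreover have "\<sigma> x \<in> swap_vals \<pi> (X ! i) z ` insert x ?T"
    using Suc.IH[OF _ \<sigma> x(1)] i by simp
  ultimately show ?case using i by (auto simp: set_take_Suc_nth)
qed

theorem mainTheorem13:
  fixes n :: nat and X :: "nat list"
  assumes "distinct X" and "set X \<subseteq> {1..n}"
  shows "(\<forall>\<phi> :: nat \<Rightarrow> nat. inj_on \<phi> (set X) \<and> \<phi> ` set X \<subseteq> {1..n} \<longrightarrow>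
            pmf_of_set {\<pi>. \<pi> permutes {1..n} \<and> (\<forall>x \<in> set X. \<pi> x = \<phi> x)} \<bind> Shuffle n X
            = pmf_of_set {\<pi>. \<pi> permutes {1..n}})
       \<and> (\<forall>P \<pi> P'. pattern_event n P \<and> vbl P = set X \<and> \<pi> permutes {1..n} \<and> occurs P \<pi> \<and>
            pattern_event n P' \<and> \<not> occurs P' \<pi> \<and>
            measure_pmf.prob (Shuffle n X \<pi>) {\<sigma>. occurs P' \<sigma>} > 0 \<longrightarrow>
            (\<exists>(x, y) \<in> P. \<exists>(x', y') \<in> P'. x = x' \<or> y = y'))"
proof (intro conjI allI impI)
  fix \<phi> :: "nat \<Rightarrow> nat"
  assume "inj_on \<phi> (set X) \<and> \<phi> ` set X \<subseteq> {1..n}"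
  with shuffle_from_uniform[OF assms, of \<phi> "length X"]
  show "pmf_of_set {\<pi>. \<pi> permutes {1..n} \<and> (\<forall>x \<in> set X. \<pi> x = \<phi> x)} \<bind> Shuffle n X
          = pmf_of_set {\<pi>. \<pi> permutes {1..n}}"
    by (simp add: Shuffle_def[abs_def] perms_agreeing_def)
next
  fix P \<pi> P'
  assume h: "pattern_event n P \<and> vbl P = set X \<and> \<pi> permutes {1..n} \<and> occurs P \<pi> \<and>
            pattern_event n P' \<and> \<not> occurs P' \<pi> \<and>
            measure_pmf.prob (Shuffle n X \<pi>) {\<sigma>. occurs P' \<sigma>} > 0"
  hence "measure_pmf.prob (Shuffle n X \<pi>) {\<sigma>. occurs P' \<sigma>} \<noteq> 0" by simp
  then obtain \<sigma> where \<sigma>: "\<sigma> \<in> set_pmf (Shuffle n X \<pi>)" "occurs P' \<sigma>"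
    by (auto simp: measure_pmf_zero_iff)
  from h obtain x' y' where x'y': "(x', y') \<in> P'" "\<pi> x' \<noteq> y'" by (auto simp: occurs_def)
  show "\<exists>(x, y) \<in> P. \<exists>(x', y') \<in> P'. x = x' \<or> y = y'"
  proof (cases "x' \<in> set X")
    case True
    then obtain y where "(x', y) \<in> P" using h by (auto simp: vbl_def)
    with x'y'(1) show ?thesis by blast
  next
    case False
    have "\<sigma> x' = y'" using \<sigma>(2) x'y'(1) by (auto simp: occurs_def)
    moreover have "\<sigma> x' \<in> \<pi> ` insert x' (set X)"
      using shuffle_from_values[OF assms order_refl] \<sigma>(1) False by (simp add: Shuffle_def)
    ultimately obtain x where "x \<in> set X" "\<pi> x = y'" using x'y'(2) by auto
    moreover from this(1) obtain y where "(x, y) \<in> P" using h by (auto simp: vbl_def)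
    moreover from this have "\<pi> x = y" using h by (auto simp: occurs_def)
    ultimately show ?thesis using x'y'(1) by blast
  qed
qed

end
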